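(* Let $p$ be an odd prime and $k\ge0$. For every $0\le l<p^k$ and $0\le l'<p^{k+1}$, every path $P\in\mathcal P(V_{1,l})\cup\mathcal P(W_{2,l'})$ has $\mathrm{des}(P)\in\{0,1\}$, and $$\mathcal M_{V_{1,l}}=\mathcal M_{W_{2,l'}}=\frac{p-1}{2}.$$
   Context: Fix an odd prime $p$ and an integer $k\ge 0$. For integers $0\le i<n$ write $\lambda(n,i)=(n-i,1^i)$ for the hook partition of $n$ with $n-i$ boxes in its first row and $i$ further boxes in its first column. If $\mu=\lambda(n',i')$ is obtained from $\lambda(n,i)$ by appending $m=(n'-i')-(n-i)\ge 0$ boxes to the first row and $n''=i'-i\ge 0$ boxes to the first column, we say $\mu$ is obtained by adding the block $B_{m,n''}$ ($m$ horizontal nodes, $n''$ vertical nodes). Put $x_s=p^k(sp-(s+1))$. The relevant part ("column $k$") of the $p$-Bratteli diagram is the graded directed graph with vertices: on floor $2k+1$, $S_i=\lambda(p^k(p-1),i)$ for $0\le i<p^k(p-1)$; on floor $2(k+s)$ ($s\ge1$), $V_{s,l}=\lambda\big(p^k(2sp-(2s+1)),\,x_s+l\big)$ for $0\le l<p^k$; on floor $2(k+s)-1$ ($s\ge2$), $W_{s,l'}=\lambda\big(p^k((2s-1)p-2s),\,x_{s-1}+l'\big)$ for $0\le l'<p^{k+1}$; and edges, each labelled by the block added: (E1) $S_i\to V_{1,l}$ exactly when $i=p^kt+l$ with $0\le t\le p-2$, block $B_{p^kt,\,p^k(p-2-t)}$; (E2) for $s\ge2$, $0\le l<p^k$, $0\le\beta\le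 p-1$: $V_{s-1,l}\to W_{s,pl+\beta}$, block $B_{p^k(p-1)-((p-1)l+\beta),\,(p-1)l+\beta}$; (E3) for $s\ge 2$, $0\le l'<p^{k+1}$ and $t=\lfloor l'/p^k\rfloor$: $W_{s,l'}\to V_{s,l'-p^kt}$, block $B_{p^kt,\,p^k(p-1-t)}$. A path ending at a vertex $v$ is a sequence of edges starting at some $S_i$ and going up one floor at a time to $v$ ($S_i\to V_{1,\cdot}\to W_{2,\cdot}\to V_{2,\cdot}\to W_{3,\cdot}\to\cdots\to v$); $\mathcal P(v)$ is the set of all paths ending at $v$. The blocks of a path are numbered $B^2,B^3,\dots,B^N$: $B^2$ is the block of the edge leaving $S_i$, and for $j\ge2$, $B^{2j-1}$ is the block of the edge into $W_{j,\cdot}$ and $B^{2j}$ the block of the edge into $V_{j,\cdot}$. Write $B^j=B_{m_j,n_j}$. Descents: $1\in\mathrm{Des}(P)$ iff $m_2=p^kt$ with $0\le t<\frac{p-1}{2}$; $2\notin\mathrm{Des}(P)$; for $3\le j<N$, $j\in\mathrm{Des}(P)$ iff $m_j>m_{j+1}$ and $n_j<n_{j+1}$. $\mathrm{des}(P)=|\mathrm{Des}(P)|$. The $p^k$-Fibonacci number of a vertex $v$ is $\mathcal M_v=\sum_{P\in\mathcal P(v)}\mathrm{des}(P)$. *)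

theory Defs
  imports Main "HOL-Computational_Algebra.Primes"
begin

text \<open>Vertices of column k of the p-Bratteli diagram:
  S i  (floor 2k+1),  V s l  (floor 2(k+s)),  W s l'  (floor 2(k+s)-1).\<close>
datatype vert = S nat | V nat nat | W nat nat

type_synonym block = "nat \<times> nat"

fun edge :: "nat \<Rightarrow> nat \<Rightarrow> vert \<Rightarrow> vert \<Rightarrow> block option" where
  "edge p k (S i) (V s l) =
     (if s = 1 \<and> i < p^k * (p - 1) \<and> l < p^k \<and> i mod p^k = l
      then Some (p^k * (i div p^k), p^k * (p - 2 - i div p^k)) else None)"
| "edge p k (V s l) (W s' l') =
     (if s \<ge> 1 \<and> s' = s + 1 \<and> l < p^k \<and> l' div p = l
      then Some (p^k * (p - 1) - ((p - 1) * l + l' mod p), (p - 1) * l + l' mod p)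
      else None)"
| "edge p k (W s l') (V s' l) =
     (if s \<ge> 2 \<and> s' = s \<and> l' < p^(k+1) \<and> l = l' mod p^k
      then Some (p^k * (l' div p^k), p^k * (p - 1 - l' div p^k)) else None)"
| "edge p k _ _ = None"

definition paths :: "nat \<Rightarrow> nat \<Rightarrow> vert \<Rightarrow> vert list set" where
  "paths p k v = {vs. 2 \<le> length vs
      \<and> (\<exists>i. hd vs = S i \<and> i < p^k * (p - 1))
      \<and> (\<forall>j < length vs - 1. edge p k (vs ! j) (vs ! (j + 1)) \<noteq> None)
      \<and> last vs = v}"

text \<open>The block B^j (j \<ge> 2) of a path: label of the (j-1)-st edge.\<close>
definition blk :: "nat \<Rightarrow> nat \<Rightarrow> vert list \<Rightarrow> nat \<Rightarrow> block" where
  "blk p k vs j = the (edge p k (vs ! (j - 2)) (vs ! (j - 1)))"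

text \<open>N = index of the last block = number of vertices of the path.\<close>
definition Des :: "nat \<Rightarrow> nat \<Rightarrow> vert list \<Rightarrow> nat set" where
  "Des p k vs =
     {j. j = 1 \<and> (\<exists>t. fst (blk p k vs 2) = p^k * t \<and> 2 * t < p - 1)}
   \<union> {j. 3 \<le> j \<and> j < length vs
        \<and> fst (blk p k vs j) > fst (blk p k vs (j + 1))
        \<and> snd (blk p k vs j) < snd (blk p k vs (j + 1))}"

definition des :: "nat \<Rightarrow> nat \<Rightarrow> vert list \<Rightarrow> nat" where
  "des p k vs = card (Des p k vs)"

definition fibM :: "nat \<Rightarrow> nat \<Rightarrow> vert \<Rightarrow> nat" where
  "fibM p k v = (\<Sum>P\<in>paths p k v. des p k P)"

end

theory Submission
  imports Defs
begin

text \<open>A path ending at \<open>V 1 l\<close> or \<open>W 2 l'\<close> has only two or three vertices, so its only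
  possible descent is at position 1, and it is determined by its starting vertex \<open>S i\<close>.
  The admissible starts are \<open>i = p\<^sup>k t + L\<close> with \<open>t < p - 1\<close> and \<open>L = l\<close> (resp. \<open>L = l' div p\<close>),
  and position 1 is a descent exactly when \<open>t < (p - 1)/2\<close>; hence every path has at most one
  descent and there are \<open>(p - 1)/2\<close> descents in total.\<close>

text \<open>The floor of a vertex, counted from the floor \<open>2k + 1\<close> of the vertices \<open>S i\<close>.\<close>
fun level :: "vert \<Rightarrow> nat" where
  "level (S i) = 0"
| "level (V s l) = 2 * s - 1"
| "level (W s l) = 2 * s - 2"

lemma edge_level: "edge p k u v \<noteq> None \<Longrightarrow> level v = Suc (level u)"
  by (cases u; cases v) (auto split: if_splits)

lemma level_nth_path:
  assumes "vs \<in> paths p k v" "j < length vs"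
  shows "level (vs ! j) = j"
  using assms(2)
proof (induction j)
  case 0
  from assms(1) have "vs \<noteq> []" unfolding paths_def by auto
  moreover from assms(1) obtain i where "hd vs = S i" unfolding paths_def by auto
  ultimately show ?case by (simp add: hd_conv_nth)
next
  case (Suc j)
  with assms(1) have "edge p k (vs ! j) (vs ! Suc j) \<noteq> None" unfolding paths_def by auto
  with Suc show ?case by (simp add: edge_level)
qed

lemma length_path:
  assumes "vs \<in> paths p k v"
  shows "length vs = Suc (level v)"
proof -
  from assms have len: "2 \<le> length vs" and "last vs = v" unfolding paths_def by auto
  then have "vs ! (length vs - 1) = v" by (metis last_conv_nth list.size(3) not_numeral_le_zero)
  with level_nth_path[OF assms, of "length vs - 1"] len show ?thesis by simp
qed

lemma mod_less_of_less_mult: "(i::nat) < q * n \<Longrightarrow> i mod q < q"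
  by (cases "q = 0") auto

lemma edge_from_S:
  "edge p k (S i) v = Some b \<Longrightarrow>
     v = V 1 (i mod p^k) \<and> b = (p^k * (i div p^k), p^k * (p - 2 - i div p^k))"
  by (cases v) (auto split: if_splits)

lemma edge_into_V1:
  "edge p k u (V 1 l) \<noteq> None \<longleftrightarrow> (\<exists>i. u = S i \<and> i < p^k * (p - 1) \<and> i mod p^k = l)"
  by (cases u) (auto split: if_splits intro: mod_less_of_less_mult)

lemma edge_into_W:
  "edge p k u (W s l') \<noteq> None \<longleftrightarrow> u = V (s - 1) (l' div p) \<and> 2 \<le> s \<and> l' div p < p^k"
  by (cases u) (auto split: if_splits)

lemma des_short_path:
  assumes "vs \<in> paths p k v" "level v \<le> 2" "hd vs = S i"
  shows "des p k vs = of_bool (2 * (i div p^k) < p - 1)"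
proof -
  from assms(1) have len: "length vs \<le> 3" "2 \<le> length vs"
    using length_path[OF assms(1)] assms(2) unfolding paths_def by auto
  with assms(3) have start: "vs ! 0 = S i" by (cases vs) auto
  from assms(1) len have "edge p k (vs ! 0) (vs ! 1) \<noteq> None" unfolding paths_def by auto
  then have "blk p k vs 2 = (p^k * (i div p^k), p^k * (p - 2 - i div p^k))"
    using edge_from_S start unfolding blk_def by fastforce
  moreover from assms(1) start have "0 < p^k"
    unfolding paths_def by (auto simp: hd_conv_nth)
  ultimately have "Des p k vs = (if 2 * (i div p^k) < p - 1 then {1} else {})"
    using len unfolding Des_def by auto
  then show ?thesis unfolding des_def by simp
qed

lemma paths_V1:
  "paths p k (V 1 l) = (\<lambda>i. [S i, V 1 l]) ` {i. i < p^k * (p - 1) \<and> i mod p^k = l}"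
proof -
  have "vs \<in> paths p k (V 1 l) \<longleftrightarrow> (\<exists>i. vs = [S i, V 1 l] \<and> i < p^k * (p - 1) \<and> i mod p^k = l)"
    for vs
  proof
    assume path: "vs \<in> paths p k (V 1 l)"
    then have "length vs = 2" by (simp add: length_path)
    then obtain u w where vs: "vs = [u, w]" by (auto simp: numeral_2_eq_2 length_Suc_conv)
    with path have "w = V 1 l" "edge p k u (V 1 l) \<noteq> None" unfolding paths_def by auto
    with vs edge_into_V1 show "\<exists>i. vs = [S i, V 1 l] \<and> i < p^k * (p - 1) \<and> i mod p^k = l"
      by blast
  next
    assume "\<exists>i. vs = [S i, V 1 l] \<and> i < p^k * (p - 1) \<and> i mod p^k = l"
    then show "vs \<in> paths p k (V 1 l)" unfolding paths_def by (auto intro: mod_less_of_less_mult)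
  qed
  then show ?thesis by blast
qed

lemma paths_W2:
  "paths p k (W 2 l') =
     (\<lambda>i. [S i, V 1 (l' div p), W 2 l']) ` {i. i < p^k * (p - 1) \<and> i mod p^k = l' div p}"
proof -
  have "vs \<in> paths p k (W 2 l') \<longleftrightarrow>
      (\<exists>i. vs = [S i, V 1 (l' div p), W 2 l'] \<and> i < p^k * (p - 1) \<and> i mod p^k = l' div p)" for vs
  proof
    assume path: "vs \<in> paths p k (W 2 l')"
    then have "length vs = 3" by (simp add: length_path)
    then obtain u v w where vs: "vs = [u, v, w]" by (auto simp: numeral_3_eq_3 length_Suc_conv)
    with path have "w = W 2 l'" "edge p k u v \<noteq> None" "edge p k v (W 2 l') \<noteq> None"
      unfolding paths_def by (auto simp: less_Suc_eq)
    with vs edge_into_V1 edge_into_W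
    show "\<exists>i. vs = [S i, V 1 (l' div p), W 2 l'] \<and> i < p^k * (p - 1) \<and> i mod p^k = l' div p"
      by auto
  next
    assume "\<exists>i. vs = [S i, V 1 (l' div p), W 2 l'] \<and> i < p^k * (p - 1) \<and> i mod p^k = l' div p"
    then obtain i where i: "vs = [S i, V 1 (l' div p), W 2 l']" "i < p^k * (p - 1)"
      "i mod p^k = l' div p" by blast
    moreover have "l' div p < p^k" using mod_less_of_less_mult[OF i(2)] i(3) by simp
    ultimately show "vs \<in> paths p k (W 2 l')" unfolding paths_def by (auto simp: less_Suc_eq)
  qed
  then show ?thesis by blast
qed

lemma card_mod_eq_div_less:
  fixes q L m :: nat
  assumes "L < q"
  shows "card {i. i mod q = L \<and> i div q < m} = m"
proof -
  have "{i. i mod q = L \<and> i div q < m} = (\<lambda>t. q * t + L) ` {..<m}"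
  proof (intro set_eqI iffI)
    fix i assume "i \<in> {i. i mod q = L \<and> i div q < m}"
    moreover have "i = q * (i div q) + i mod q" by simp
    ultimately show "i \<in> (\<lambda>t. q * t + L) ` {..<m}" by blast
  next
    fix i assume "i \<in> (\<lambda>t. q * t + L) ` {..<m}"
    with assms show "i \<in> {i. i mod q = L \<and> i div q < m}" by auto
  qed
  moreover have "inj_on (\<lambda>t. q * t + L) {..<m}"
    using assms by (auto simp: inj_on_def)
  ultimately show ?thesis by (simp add: card_image)
qed

lemma card_descent_starts:
  fixes p q L :: nat
  assumes "odd p" "L < q"
  shows "card ({i. i < q * (p - 1) \<and> i mod q = L} \<inter> {i. 2 * (i div q) < p - 1}) = (p - 1) div 2"
proof -
  have "i < q * (p - 1) \<longleftrightarrow> i div q < p - 1" for i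
    using assms(2) by (simp add: div_less_iff_less_mult mult.commute)
  moreover have "t < p - 1 \<and> 2 * t < p - 1 \<longleftrightarrow> t < (p - 1) div 2" for t
    using assms(1) by (auto elim!: oddE)
  ultimately have "i < q * (p - 1) \<and> 2 * (i div q) < p - 1 \<longleftrightarrow> i div q < (p - 1) div 2" for i
    by blast
  then have "{i. i < q * (p - 1) \<and> i mod q = L} \<inter> {i. 2 * (i div q) < p - 1}
      = {i. i mod q = L \<and> i div q < (p - 1) div 2}"
    by blast
  then show ?thesis using card_mod_eq_div_less[OF assms(2)] by simp
qed

lemma fibM_short_paths:
  assumes paths: "paths p k v = (\<lambda>i. S i # us) ` {i. i < p^k * (p - 1) \<and> i mod p^k = L}"
    and "level v \<le> 2" "odd p" "L < p^k"
  shows "fibM p k v = (p - 1) div 2"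
proof -
  let ?I = "{i. i < p^k * (p - 1) \<and> i mod p^k = L}"
  have "finite ?I" by (rule finite_subset[of _ "{..<p^k * (p - 1)}"]) auto
  have "fibM p k v = (\<Sum>i\<in>?I. des p k (S i # us))"
    unfolding fibM_def paths by (simp add: sum.reindex inj_on_def)
  also have "\<dots> = (\<Sum>i\<in>?I. of_bool (2 * (i div p^k) < p - 1))"
    using des_short_path[OF _ \<open>level v \<le> 2\<close>] paths by (intro sum.cong) auto
  also have "\<dots> = card (?I \<inter> {i. 2 * (i div p^k) < p - 1})"
    using \<open>finite ?I\<close> by simp
  also have "\<dots> = (p - 1) div 2"
    using card_descent_starts assms(3,4) by blast
  finally show ?thesis .
qed

theorem mainTheorem2:
  fixes p k l l' :: nat
  assumes "prime p" and "odd p" and "l < p^k" and "l' < p^(k+1)"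
  shows "(\<forall>P \<in> paths p k (V 1 l) \<union> paths p k (W 2 l'). des p k P \<in> {0, 1})
         \<and> fibM p k (V 1 l) = (p - 1) div 2
         \<and> fibM p k (W 2 l') = (p - 1) div 2"
proof -
  have des_01: "des p k P \<in> {0, 1}" if "P \<in> paths p k v" "level v \<le> 2" for P v
  proof -
    from \<open>P \<in> paths p k v\<close> obtain i where "hd P = S i" unfolding paths_def by blast
    with des_short_path[OF that] show ?thesis by simp
  qed
  have "l' div p < p^k"
    using assms(2,4) by (cases "p = 0") (auto simp: div_less_iff_less_mult mult.commute)
  then have "fibM p k (W 2 l') = (p - 1) div 2"
    using fibM_short_paths[OF paths_W2] assms(2) by simp
  moreover have "fibM p k (V 1 l) = (p - 1) div 2"
    using fibM_short_paths[OF paths_V1] assms(2,3) by simp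
  moreover have "des p k P \<in> {0, 1}" if "P \<in> paths p k (V 1 l) \<union> paths p k (W 2 l')" for P
    using that des_01[of P] by auto
  ultimately show ?thesis by blast
qed

end
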